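(* Let $\Gamma\subset\mathrm{SL}_2(\mathbb{R})$ be a Fuchsian group acting freely and properly discontinuously on $\mathbb{H}$. The map $D$ takes every grouplike element of $\mathbb{C}\langle\langle M^\vee\rangle\rangle$ to an element of the group $\mathbb{D}_0=\exp(\mathfrak{d}_0^\rho)$.
   Context: Fix a basis $\mathcal{B}$ of the weight-graded space $\mathrm{M}(\Gamma)$ of modular forms for $\Gamma$, with weight-$k$ part $\mathcal{B}_k$ containing a basis of the weight-$k$ cusp forms; let $h_1,\dots,h_n\in\mathcal{B}_4$ be the basis of the weight-4 cusp forms $\mathrm{S}_4(\Gamma)$. Let $M_k^\vee$ be the dual of the weight-$k$ modular forms, with basis symbols $A_h$, $h\in\mathcal{B}_k$. Let $V_{k-2}$ be the space of polynomials of degree $\le k-2$ (in a variable, later evaluated at $\tau$), and $M^\vee=\bigoplus_{k\ge0}M_k^\vee\otimes V_{k-2}$. $\mathbb{C}\langle\langle M^\vee\rangle\rangle$ is the completed tensor algebra on $M^\vee$ (non-commutative formal power series), with completed coproduct $\Delta$ for which every element $v$ of $M^\vee$ is primitive, $\Delta v=v\otimes1+1\otimes v$; $S$ is grouplike if $\Delta S=S\otimes S$ and $S$ has constant term $1$. The map $D$ is the continuous linear map $\mathbb{C}\langle\langle M^\vee\rangle\rangle\to\mathbb{C}[\tau,\partial_\tau][[\rho_1,\dots,\rho_n]]$ (with commuting $\rho_i$) sending $1\mapsto1$ and a word $(A_{g_1}\otimes p_1)\cdots(A_{g_r}\otimes p_r)$ to $\rho_{i_1}\cdots\rho_{i_r}\,(p_1(\tau)\partial_\tau)\cdots(p_r(\tau)\partial_\tau)$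 (product of differential operators) if each $g_s=h_{i_s}$ is one of the weight-4 cusp forms $h_1,\dots,h_n$, and to $0$ otherwise. $\mathfrak{d}_0=\{p(\tau)\partial_\tau : p\in\mathbb{C}[\tau],\deg p\le2\}$ with commutator bracket, $\mathfrak{d}_0^\rho=(\rho)\mathfrak{d}_0[[\rho_1,\dots,\rho_n]]$ where $(\rho)$ is the ideal generated by the $\rho_i$, and $\mathbb{D}_0=\exp(\mathfrak{d}_0^\rho)$ inside the invertible power series in $\rho$ with coefficients in differential operators. *)

theory Defs
  imports "HOL-Computational_Algebra.Polynomial" "HOL-Library.Multiset"
begin

text \<open>Letters of the alphabet of M-dual: a letter (g, j) stands for the basis
  element A_g \<otimes> \<tau>^j of M_k^dual \<otimes> V_{k-2}, where g is a basis element of weight k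
  (given by wt) and 0 \<le> j \<le> k - 2.  A series in the completed tensor algebra is a
  coefficient function on words in these letters.\<close>

definition valid_letter :: "('b \<Rightarrow> nat) \<Rightarrow> 'b set \<Rightarrow> 'b \<times> nat \<Rightarrow> bool" where
  "valid_letter wt B a \<longleftrightarrow> fst a \<in> B \<and> 2 \<le> wt (fst a) \<and> snd a \<le> wt (fst a) - 2"

definition in_series_algebra :: "('b \<Rightarrow> nat) \<Rightarrow> 'b set \<Rightarrow> (('b \<times> nat) list \<Rightarrow> complex) \<Rightarrow> bool" where
  "in_series_algebra wt B S \<longleftrightarrow> (\<forall>w. \<not> list_all (valid_letter wt B) w \<longrightarrow> S w = 0)"

definition shuffle_mult :: "'a list \<Rightarrow> 'a list \<Rightarrow> 'a list \<Rightarrow> nat" where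
  "shuffle_mult u v w = card {I. I \<subseteq> {..<length w} \<and> card I = length u \<and>
       nths w I = u \<and> nths w ({..<length w} - I) = v}"

text \<open>Completed coproduct (letters primitive): coefficient of u \<otimes> v in \<Delta> S.\<close>
definition coproduct :: "('a list \<Rightarrow> complex) \<Rightarrow> ('a list \<times> 'a list \<Rightarrow> complex)" where
  "coproduct S = (\<lambda>(u, v). \<Sum>w\<in>shuffles u v. S w * of_nat (shuffle_mult u v w))"

definition grouplike :: "('a list \<Rightarrow> complex) \<Rightarrow> bool" where
  "grouplike S \<longleftrightarrow> S [] = 1 \<and> coproduct S = (\<lambda>(u, v). S u * S v)"

text \<open>Differential operators in C[\<tau>, \<partial>_\<tau>] are represented by their (faithful) action
  on C[\<tau>]; the product of operators is composition.\<close>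
type_synonym dop = "complex poly \<Rightarrow> complex poly"

definition letter_op :: "nat \<Rightarrow> dop" where
  "letter_op j = (\<lambda>q. monom 1 j * pderiv q)"

definition word_op :: "nat list \<Rightarrow> dop" where
  "word_op js = foldr (\<lambda>j f. letter_op j \<circ> f) js id"

text \<open>Power series in commuting \<rho>_0, ..., \<rho>_{n-1}: functions from monomials
  (multisets of indices) to differential operators.\<close>
type_synonym psD = "nat multiset \<Rightarrow> dop"

definition Dmap :: "nat \<Rightarrow> (nat \<Rightarrow> 'b) \<Rightarrow> (('b \<times> nat) list \<Rightarrow> complex) \<Rightarrow> psD" where
  "Dmap n h S = (\<lambda>m q. \<Sum>iw\<in>{iw. set iw \<subseteq> {..<n} \<times> {..2} \<and> mset (map fst iw) = m}.
      smult (S (map (\<lambda>(i, j). (h i, j)) iw)) (word_op (map snd iw) q))"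

definition d0 :: "dop set" where
  "d0 = {f. \<exists>p. degree p \<le> 2 \<and> f = (\<lambda>q. p * pderiv q)}"

definition d0rho :: "nat \<Rightarrow> psD set" where
  "d0rho n = {X. X {#} = (\<lambda>q. 0) \<and> (\<forall>m. X m \<in> d0) \<and>
                 (\<forall>m. \<not> set_mset m \<subseteq> {..<n} \<longrightarrow> X m = (\<lambda>q. 0))}"

definition ps_one :: psD where
  "ps_one = (\<lambda>m. if m = {#} then id else (\<lambda>q. 0))"

definition ps_mult :: "psD \<Rightarrow> psD \<Rightarrow> psD" where
  "ps_mult A B = (\<lambda>m q. \<Sum>m1\<in>{m1. m1 \<subseteq># m}. A m1 (B (m - m1) q))"

primrec ps_pow :: "psD \<Rightarrow> nat \<Rightarrow> psD" where
  "ps_pow X 0 = ps_one"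
| "ps_pow X (Suc k) = ps_mult X (ps_pow X k)"

text \<open>exp of a series without constant term: X^k has no monomials of degree < k,
  so the coefficient at m only involves k \<le> size m.\<close>
definition ps_exp :: "psD \<Rightarrow> psD" where
  "ps_exp X = (\<lambda>m q. \<Sum>k\<le>size m. smult (1 / fact k) (ps_pow X k m q))"

definition D0 :: "nat \<Rightarrow> psD set" where
  "D0 n = ps_exp ` d0rho n"

end

theory Submission
  imports Defs
begin

text \<open>The image \<open>G = D S\<close> of a grouplike \<open>S\<close> is a series of differential operators on \<open>\<complex>[\<tau>]\<close>
  with \<open>G\<^sub>0 = id\<close> which is multiplicative, \<open>G\<^sub>m (f g) = \<Sum>\<^sub>a\<^sub>+\<^sub>b\<^sub>=\<^sub>m G\<^sub>a f \<cdot> G\<^sub>b g\<close>, because \<open>S\<close> is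
  grouplike and the letters act by derivations. Its logarithm \<open>X\<close>, built by recursion on the
  degree of the monomial so that \<open>exp X = G\<close>, consists of derivations: comparing the product
  rules of \<open>G\<close> and of the exponential of the part of \<open>X\<close> of lower degree leaves exactly the
  Leibniz rule for \<open>X\<^sub>m\<close>. A \<open>\<complex>\<close>-linear derivation of \<open>\<complex>[\<tau>]\<close> is \<open>p \<partial>\<^sub>\<tau>\<close>, and it remains to show
  \<open>deg p \<le> 2\<close>. For this, run the same construction with the letters acting on
  \<open>\<complex>[x\<^sub>1, x\<^sub>2, x\<^sub>3, x\<^sub>4]\<close> by the diagonal vector fields \<open>\<Sum>\<^sub>k x\<^sub>k\<^sup>j \<partial>\<^sub>k\<close>. For \<open>j \<le> 2\<close> these
  preserve the cross-ratio of the four points; this survives products, exponentials and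
  logarithms, and the logarithm acts there as \<open>\<Sum>\<^sub>k p(x\<^sub>k) \<partial>\<^sub>k\<close>. Specializing the invariance of
  the cross-ratio at \<open>x\<^sub>2, x\<^sub>3, x\<^sub>4 = 0, 1, 2\<close> shows that \<open>p\<close> is the quadratic polynomial
  interpolating its values at \<open>0, 1, 2\<close>.\<close>

lemma finite_submultisets [simp]: "finite {a. a \<subseteq># m}"
proof -
  have "{a. a \<subseteq># m} \<subseteq> mset ` {xs. set xs \<subseteq> set_mset m \<and> length xs \<le> size m}"
  proof
    fix a assume "a \<in> {a. a \<subseteq># m}"
    then have a: "a \<subseteq># m" by simp
    obtain xs where "mset xs = a" using ex_mset by blast
    with a show "a \<in> mset ` {xs. set xs \<subseteq> set_mset m \<and> length xs \<le> size m}"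
      by (auto intro!: image_eqI[of _ _ xs] dest: mset_subset_eqD size_mset_mono)
  qed
  then show ?thesis
    by (rule finite_subset) (intro finite_imageI finite_lists_length_le finite_set_mset)
qed

lemma sum_submultisets_nested:
  "(\<Sum>b | b \<subseteq># m. \<Sum>a | a \<subseteq># m - b. F b a) = (\<Sum>(b, a) | b + a \<subseteq># m. F b a)"
proof -
  have "Sigma {b. b \<subseteq># m} (\<lambda>b. {a. a \<subseteq># m - b}) = {(b, a). b + a \<subseteq># m}"
  proof (intro set_eqI iffI)
    fix x assume "x \<in> {(b, a). b + a \<subseteq># m}"
    then obtain b a where x: "x = (b, a)" and ba: "b + a \<subseteq># m" by auto
    then have "b \<subseteq># m" using mset_subset_eq_add_left subset_mset.order_trans by blast
    with ba x show "x \<in> Sigma {b. b \<subseteq># m} (\<lambda>b. {a. a \<subseteq># m - b})"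
      by (simp add: subset_mset.le_diff_conv2 add.commute)
  qed (auto simp: subset_mset.le_diff_conv2 add.commute)
  then show ?thesis
    by (simp add: sum.Sigma)
qed

lemma sum_submultisets_swap:
  "(\<Sum>b | b \<subseteq># m. \<Sum>a | a \<subseteq># m - b. F b a) = (\<Sum>a | a \<subseteq># m. \<Sum>b | b \<subseteq># m - a. F b a)"
proof -
  have "(\<Sum>(b, a) | b + a \<subseteq># m. F b a) = (\<Sum>(a, b) | a + b \<subseteq># m. F b a)"
    by (rule sum.reindex_bij_witness[of _ prod.swap prod.swap]) (auto simp: add.commute)
  then show ?thesis
    by (simp add: sum_submultisets_nested)
qed

lemma sum_submultisets_assoc:
  "(\<Sum>c | c \<subseteq># m. \<Sum>b | b \<subseteq># c. F b (c - b)) = (\<Sum>b | b \<subseteq># m. \<Sum>a | a \<subseteq># m - b. F b a)"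
proof -
  have "(\<Sum>c | c \<subseteq># m. \<Sum>b | b \<subseteq># c. F b (c - b))
      = (\<Sum>(c, b)\<in>Sigma {c. c \<subseteq># m} (\<lambda>c. {b. b \<subseteq># c}). F b (c - b))"
    by (simp add: sum.Sigma)
  also have "\<dots> = (\<Sum>(b, a) | b + a \<subseteq># m. F b a)"
    by (rule sum.reindex_bij_witness[of _ "\<lambda>(b, a). (b + a, b)" "\<lambda>(c, b). (b, c - b)"])
      (auto simp: subset_mset.add_diff_inverse)
  finally show ?thesis
    by (simp add: sum_submultisets_nested)
qed

locale comm_ring_hom = additive hom for hom :: "'a::comm_ring_1 \<Rightarrow> 'b::comm_ring_1" +
  assumes hom_mult: "hom (x * y) = hom x * hom y"
    and hom_one: "hom 1 = 1"
begin

lemmas hom_add = add and hom_zero = zero and hom_diff = diff and hom_sum = sum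

lemma hom_of_nat: "hom (of_nat n) = of_nat n"
  by (induction n) (simp_all add: hom_zero hom_add hom_one)

end

lemma additive_of_nat_mult:
  fixes F :: "'a::ring_1 \<Rightarrow> 'b::ring_1"
  assumes "additive F"
  shows "F (of_nat n * x) = of_nat n * F x"
  by (induction n) (simp_all add: additive.zero[OF assms] additive.add[OF assms] algebra_simps)

locale derivation = additive d for d :: "'a::comm_ring_1 \<Rightarrow> 'a" +
  assumes leibniz: "d (x * y) = d x * y + x * d y"

lemma derivation_zero: "derivation (\<lambda>x. 0 :: 'a::comm_ring_1)"
  by unfold_locales simp_all

lemma derivation_one: "derivation d \<Longrightarrow> d 1 = 0"
  using derivation.leibniz[of d 1 1] by simp

lemma derivation_diff_mult:
  "derivation L \<Longrightarrow> L ((a - b) * (c - e)) = (L a - L b) * (c - e) + (a - b) * (L c - L e)"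
  by (simp add: derivation.leibniz additive.diff[OF derivation.axioms(1)])

section \<open>Series of operators and their logarithm\<close>

text \<open>The operations \<open>ps_one\<close>, \<open>ps_mult\<close>, \<open>ps_pow\<close> and \<open>ps_exp\<close> are the instances of the
  following ones for the coefficient ring \<open>complex poly\<close> with scalars \<open>\<lambda>c. [:c:]\<close>
  (\<open>ps_exp_eq_opser_exp\<close>); the scalar embedding \<open>\<kappa>\<close> lets them act on polynomial rings in
  several variables as well.\<close>

type_synonym ('i, 'r) op_series = "'i multiset \<Rightarrow> 'r \<Rightarrow> 'r"

definition opser_one :: "('i, 'r::zero) op_series" where
  "opser_one m = (if m = {#} then id else (\<lambda>q. 0))"

definition opser_mult :: "('i, 'r::comm_monoid_add) op_series \<Rightarrow> ('i, 'r) op_series \<Rightarrow> ('i, 'r) op_series"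
  where "opser_mult A B m q = (\<Sum>a | a \<subseteq># m. A a (B (m - a) q))"

primrec opser_pow :: "('i, 'r::comm_monoid_add) op_series \<Rightarrow> nat \<Rightarrow> ('i, 'r) op_series" where
  "opser_pow X 0 = opser_one"
| "opser_pow X (Suc k) = opser_mult X (opser_pow X k)"

definition opser_exp :: "(complex \<Rightarrow> 'r::comm_ring_1) \<Rightarrow> ('i, 'r) op_series \<Rightarrow> ('i, 'r) op_series"
  where "opser_exp \<kappa> X m q = (\<Sum>k\<le>size m. \<kappa> (1 / fact k) * opser_pow X k m q)"

definition opser_trunc :: "nat \<Rightarrow> ('i, 'r::zero) op_series \<Rightarrow> ('i, 'r) op_series" where
  "opser_trunc s X m = (if size m < s then X m else (\<lambda>q. 0))"

lemma ps_exp_eq_opser_exp: "ps_exp = opser_exp (\<lambda>c. [:c:])"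
proof -
  have "ps_pow X k = opser_pow X k" for X k
    by (induction k) (simp_all add: fun_eq_iff ps_one_def opser_one_def ps_mult_def opser_mult_def)
  then show ?thesis
    by (simp add: fun_eq_iff ps_exp_def opser_exp_def)
qed

lemma opser_mult_one_right:
  assumes "\<And>m. additive (A m)"
  shows "opser_mult A opser_one m q = A m q"
proof -
  have "opser_mult A opser_one m q = (\<Sum>a | a \<subseteq># m. if a = m then A m q else 0)"
    unfolding opser_mult_def
    by (rule sum.cong) (auto simp: opser_one_def additive.zero[OF assms] subset_mset.add_diff_inverse
        dest: subset_mset.diff_add)
  then show ?thesis
    by (simp add: sum.delta)
qed

lemma additive_opser_one: "additive (opser_one m :: 'r::ab_group_add \<Rightarrow> 'r)"
  by unfold_locales (simp add: opser_one_def)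

lemma additive_opser_mult:
  assumes "\<And>m. additive (A m)" and "\<And>m. additive (B m)"
  shows "additive (opser_mult A B m)"
  by unfold_locales
    (simp add: opser_mult_def additive.add[OF assms(1)] additive.add[OF assms(2)] sum.distrib)

lemma additive_opser_pow: "(\<And>m. additive (X m)) \<Longrightarrow> additive (opser_pow X k m)"
  by (induction k arbitrary: m) (simp_all add: additive_opser_one additive_opser_mult)

lemma additive_opser_exp: "(\<And>m. additive (X m)) \<Longrightarrow> additive (opser_exp \<kappa> X m)"
  by unfold_locales (simp add: opser_exp_def additive.add[OF additive_opser_pow] sum.distrib
      algebra_simps)

lemma additive_opser_trunc: "(\<And>m. additive (X m)) \<Longrightarrow> additive (opser_trunc s X m)"
  by (simp add: opser_trunc_def additive_def)

lemma opser_pow_eq_0_below_size: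
  assumes X0: "X {#} = (\<lambda>q. 0)" and additive: "\<And>m. additive (X m)"
  shows "size m < k \<Longrightarrow> opser_pow X k m q = 0"
proof (induction k arbitrary: m q)
  case (Suc k)
  have "X a (opser_pow X k (m - a) q) = 0" if "a \<subseteq># m" for a
  proof (cases "a = {#}")
    case False
    then have "size (m - a) < k"
      using Suc.prems that size_mset_mono[OF that]
      by (simp add: size_Diff_submset nonempty_has_size less_diff_conv2)
    then show ?thesis
      using Suc.IH additive.zero[OF additive] by simp
  qed (simp add: X0)
  then show ?case
    by (simp add: opser_mult_def)
qed simp

lemma opser_exp_empty: "comm_ring_hom \<kappa> \<Longrightarrow> opser_exp \<kappa> X {#} = id"
  by (auto simp: opser_exp_def opser_one_def comm_ring_hom.hom_one)

text \<open>Powers only see the factors of smaller size, except that the first power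
  \<open>opser_pow X 1 m = X m\<close> also sees the factor at \<open>m\<close> itself.\<close>

lemma opser_pow_trunc:
  assumes X0: "X {#} = (\<lambda>q. 0)" and additive: "\<And>m. additive (X m)"
  shows "size m < s \<or> (size m = s \<and> k \<noteq> 1) \<Longrightarrow> opser_pow (opser_trunc s X) k m = opser_pow X k m"
proof (induction k arbitrary: m)
  case (Suc k)
  have T0: "opser_trunc s X {#} = (\<lambda>q. 0)" and T_additive: "\<And>m. additive (opser_trunc s X m)"
    using X0 additive by (auto simp: opser_trunc_def additive_def)
  have "opser_trunc s X a (opser_pow (opser_trunc s X) k (m - a) q) = X a (opser_pow X k (m - a) q)"
    if a: "a \<subseteq># m" for a q
  proof (cases "a = {#}")
    case False
    have "size a \<le> size m" "size (m - a) = size m - size a" "0 < size a"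
      using a False by (simp_all add: size_mset_mono size_Diff_submset nonempty_has_size)
    show ?thesis
    proof (cases "size a < s")
      case True
      then have "size (m - a) < s"
        using Suc.prems \<open>size a \<le> size m\<close> \<open>size (m - a) = size m - size a\<close> \<open>0 < size a\<close> by linarith
      then have "opser_pow (opser_trunc s X) k (m - a) = opser_pow X k (m - a)"
        using Suc.IH by blast
      with True show ?thesis
        by (simp add: opser_trunc_def)
    next
      case False
      then have "size a = size m" "size m = s"
        using Suc.prems \<open>size a \<le> size m\<close> by auto
      then have "a = m"
        using a by (metis mset_subset_size subset_mset.le_neq_trans less_irrefl)
      have "k \<noteq> 0"
        using Suc.prems \<open>size m = s\<close> by auto
      with \<open>a = m\<close> have "opser_pow (opser_trunc s X) k (m - a) q = 0" "opser_pow X k (m - a) q = 0"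
        by (simp_all add: opser_pow_eq_0_below_size T0 T_additive X0 additive)
      then show ?thesis
        by (simp add: additive.zero[OF T_additive] additive.zero[OF additive])
    qed
  qed (simp add: X0 T0)
  then show ?case
    by (auto simp: opser_mult_def intro!: sum.cong)
qed simp

lemma opser_exp_trunc_below_size:
  assumes "X {#} = (\<lambda>q. 0)" and "\<And>m. additive (X m)" and "size m < s"
  shows "opser_exp \<kappa> (opser_trunc s X) m = opser_exp \<kappa> X m"
  using assms by (intro ext) (simp add: opser_exp_def opser_pow_trunc)

lemma opser_exp_split:
  assumes \<kappa>: "comm_ring_hom \<kappa>" and X0: "X {#} = (\<lambda>q. 0)" and additive: "\<And>m. additive (X m)"
  shows "opser_exp \<kappa> X m q = X m q + opser_exp \<kappa> (opser_trunc (size m) X) m q"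
proof -
  let ?T = "opser_trunc (size m) X"
  have "\<kappa> (1 / fact k) * (opser_pow X k m q - opser_pow ?T k m q) = (if k = 1 then X m q else 0)"
    for k
  proof (cases "k = 1")
    case True
    then show ?thesis
      using additive by (simp add: opser_mult_one_right additive_opser_trunc
          comm_ring_hom.hom_one[OF \<kappa>])
        (simp add: opser_trunc_def)
  qed (simp add: opser_pow_trunc[where X=X, OF X0 additive])
  then have "opser_exp \<kappa> X m q - opser_exp \<kappa> ?T m q = (\<Sum>k\<le>size m. if k = 1 then X m q else 0)"
    by (simp add: opser_exp_def sum_subtractf[symmetric] right_diff_distrib)
  also have "\<dots> = X m q"
    using X0 by (cases "m = {#}") (auto simp: nonempty_has_size Suc_le_eq)
  finally show ?thesis
    by (simp add: algebra_simps)
qed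

text \<open>The logarithm is built by recursion on the size of the index: \<open>opser_log_trunc \<kappa> G k\<close> is its
  restriction to indices of size below \<open>k\<close>, and at an index of size \<open>k\<close> the value is the one
  forced by \<open>opser_exp_split\<close>.\<close>

primrec opser_log_trunc :: "(complex \<Rightarrow> 'r::comm_ring_1) \<Rightarrow> ('i, 'r) op_series \<Rightarrow> nat \<Rightarrow> ('i, 'r) op_series"
  where
    "opser_log_trunc \<kappa> G 0 m = (\<lambda>q. 0)"
  | "opser_log_trunc \<kappa> G (Suc k) m =
      (if size m = k then (\<lambda>q. G m q - opser_exp \<kappa> (opser_log_trunc \<kappa> G k) m q) else
          opser_log_trunc \<kappa> G k m)"

definition opser_log :: "(complex \<Rightarrow> 'r::comm_ring_1) \<Rightarrow> ('i, 'r) op_series \<Rightarrow> ('i, 'r) op_series"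
  where "opser_log \<kappa> G m = opser_log_trunc \<kappa> G (Suc (size m)) m"

lemma opser_log_trunc_eq: "opser_log_trunc \<kappa> G k = opser_trunc k (opser_log \<kappa> G)"
proof -
  have "opser_log_trunc \<kappa> G k m = (if size m < k then opser_log \<kappa> G m else (\<lambda>q. 0))" for m
  proof (induction k arbitrary: m)
    case (Suc k)
    show ?case
    proof (cases "size m = k")
      case True
      then have "opser_log \<kappa> G m = opser_log_trunc \<kappa> G (Suc k) m"
        by (simp only: opser_log_def)
      with True show ?thesis
        by simp
    qed (use Suc.IH in auto)
  qed simp
  then show ?thesis
    by (auto simp: opser_trunc_def)
qed

lemma opser_log_eq:
  "opser_log \<kappa> G m = (\<lambda>q. G m q - opser_exp \<kappa> (opser_trunc (size m) (opser_log \<kappa> G)) m q)"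
  unfolding opser_log_def[of \<kappa> G m] opser_log_trunc.simps(2) by (simp add: opser_log_trunc_eq)

lemma opser_log_induct [case_names less]:
  assumes "\<And>m. (\<And>m'. P (opser_trunc (size m) (opser_log \<kappa> G) m')) \<Longrightarrow> P (opser_log \<kappa> G m)"
    and "P (\<lambda>q. 0)"
  shows "P (opser_log \<kappa> G m)"
proof (induction "size m" arbitrary: m rule: less_induct)
  case less
  show ?case
  proof (rule assms(1))
    fix m'
    show "P (opser_trunc (size m) (opser_log \<kappa> G) m')"
      by (cases "size m' < size m") (simp_all add: opser_trunc_def less assms(2))
  qed
qed

lemma opser_log_empty: "comm_ring_hom \<kappa> \<Longrightarrow> G {#} = id \<Longrightarrow> opser_log \<kappa> G {#} = (\<lambda>q. 0)"
  by (simp add: opser_log_eq opser_exp_empty fun_eq_iff)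

lemma additive_opser_log:
  assumes "\<And>m. additive (G m)"
  shows "additive (opser_log \<kappa> G m)"
proof (induction rule: opser_log_induct)
  case (less m)
  have "additive (opser_exp \<kappa> (opser_trunc (size m) (opser_log \<kappa> G)) m)"
    using less by (rule additive_opser_exp)
  then show ?case
    using assms by (simp add: opser_log_eq additive_def)
qed (simp add: additive_def)

lemma opser_exp_log:
  assumes \<kappa>: "comm_ring_hom \<kappa>" and G0: "G {#} = id" and additive: "\<And>m. additive (G m)"
  shows "opser_exp \<kappa> (opser_log \<kappa> G) = G"
proof (intro ext)
  fix m q
  show "opser_exp \<kappa> (opser_log \<kappa> G) m q = G m q"
    by (subst opser_exp_split[where X="opser_log \<kappa> G", OF \<kappa> opser_log_empty[where G=G, OF \<kappa> G0]
        additive_opser_log[where G=G, OF additive]])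
      (simp add: opser_log_eq)
qed

lemma opser_pow_eq_0_outside:
  assumes additive: "\<And>m. additive (Y m)" and Y: "\<And>m. \<not> set_mset m \<subseteq> B \<Longrightarrow> Y m = (\<lambda>q. 0)"
  shows "\<not> set_mset m \<subseteq> B \<Longrightarrow> opser_pow Y k m = (\<lambda>q. 0)"
proof (induction k arbitrary: m)
  case 0
  then show ?case
    by (auto simp: opser_one_def)
next
  case (Suc k)
  have "Y a (opser_pow Y k (m - a) q) = 0" if "a \<subseteq># m" for a q
  proof (cases "set_mset a \<subseteq> B")
    case True
    obtain x where "x \<in># m" "x \<notin> B"
      using Suc.prems by auto
    moreover have "x \<notin># a"
      using True \<open>x \<notin> B\<close> by blast
    ultimately have "x \<in># m - a"
      by (simp add: in_diff_count not_in_iff)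
    with \<open>x \<notin> B\<close> have "\<not> set_mset (m - a) \<subseteq> B"
      by auto
    then show ?thesis
      using Suc.IH additive.zero[OF additive] by simp
  qed (simp add: Y)
  then show ?case
    by (simp add: fun_eq_iff opser_mult_def)
qed

lemma opser_log_eq_0_outside:
  assumes additive: "\<And>m. additive (G m)" and G: "\<And>m. \<not> set_mset m \<subseteq> B \<Longrightarrow> G m = (\<lambda>q. 0)"
  shows "\<not> set_mset m \<subseteq> B \<Longrightarrow> opser_log \<kappa> G m = (\<lambda>q. 0)"
proof (induction "size m" arbitrary: m rule: less_induct)
  case less
  let ?Y = "opser_trunc (size m) (opser_log \<kappa> G)"
  have Y_outside: "?Y a = (\<lambda>q. 0)" if "\<not> set_mset a \<subseteq> B" for a
    using less that by (simp add: opser_trunc_def)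
  have "opser_pow ?Y k m = (\<lambda>q. 0)" for k
    using additive_opser_trunc[OF additive_opser_log[OF additive]]
    by (rule opser_pow_eq_0_outside[where Y="?Y", OF _ Y_outside less.prems])
  then show ?case
    using G[OF less.prems] by (simp add: opser_log_eq opser_exp_def)
qed

definition intertwines :: "('r \<Rightarrow> 's) \<Rightarrow> ('i, 'r) op_series \<Rightarrow> ('i, 's) op_series \<Rightarrow> bool" where
  "intertwines \<iota> F G \<longleftrightarrow> (\<forall>m x. G m (\<iota> x) = \<iota> (F m x))"

lemma intertwines_opser_one: "additive \<iota> \<Longrightarrow> intertwines \<iota> opser_one opser_one"
  by (simp add: intertwines_def opser_one_def additive.zero)

lemma intertwines_opser_mult:
  "additive \<iota> \<Longrightarrow> intertwines \<iota> A A' \<Longrightarrow> intertwines \<iota> B B' \<Longrightarrow>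
    intertwines \<iota> (opser_mult A B) (opser_mult A' B')"
  by (simp add: intertwines_def opser_mult_def additive.sum)

lemma intertwines_opser_pow:
  "additive \<iota> \<Longrightarrow> intertwines \<iota> X X' \<Longrightarrow> intertwines \<iota> (opser_pow X k) (opser_pow X' k)"
  by (induction k) (simp_all add: intertwines_opser_one intertwines_opser_mult)

lemma intertwines_opser_exp:
  assumes "additive \<iota>" and "\<And>c x. \<iota> (\<kappa> c * x) = \<kappa>' c * \<iota> x" and "intertwines \<iota> X X'"
  shows "intertwines \<iota> (opser_exp \<kappa> X) (opser_exp \<kappa>' X')"
  using intertwines_opser_pow[OF assms(1,3)] assms(1,2)
  by (simp add: intertwines_def opser_exp_def additive.sum)

lemma intertwines_opser_log:
  assumes \<iota>: "additive \<iota>" and \<kappa>: "\<And>c x. \<iota> (\<kappa> c * x) = \<kappa>' c * \<iota> x" and G: "intertwines \<iota> G G'"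
  shows "intertwines \<iota> (opser_log \<kappa> G) (opser_log \<kappa>' G')"
proof -
  have "opser_log \<kappa>' G' m (\<iota> x) = \<iota> (opser_log \<kappa> G m x)" for m x
  proof (induction "size m" arbitrary: m x rule: less_induct)
    case less
    have "intertwines \<iota> (opser_trunc (size m) (opser_log \<kappa> G)) (opser_trunc (size m) (opser_log \<kappa>' G'))"
      using less additive.zero[OF \<iota>] by (simp add: intertwines_def opser_trunc_def)
    then have "intertwines \<iota> (opser_exp \<kappa> (opser_trunc (size m) (opser_log \<kappa> G)))
        (opser_exp \<kappa>' (opser_trunc (size m) (opser_log \<kappa>' G')))"
      by (rule intertwines_opser_exp[where \<kappa>=\<kappa> and \<kappa>'=\<kappa>', OF \<iota> \<kappa>])
    then show ?case
      using G by (simp add: opser_log_eq[of _ _ m] intertwines_def additive.diff[OF \<iota>])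
  qed
  then show ?thesis
    by (simp add: intertwines_def)
qed

section \<open>Exponentials and logarithms of derivations\<close>

definition opser_multiplicative :: "('i, 'r::comm_ring_1) op_series \<Rightarrow> bool" where
  "opser_multiplicative G \<longleftrightarrow> (\<forall>m f g. G m (f * g) = (\<Sum>a | a \<subseteq># m. G a f * G (m - a) g))"

lemma sum_opser_mult_left:
  fixes Y A B :: "('i, 'r::comm_semiring_0) op_series"
  shows "(\<Sum>b | b \<subseteq># m. \<Sum>a | a \<subseteq># m - b. Y b (A a f) * B (m - (b + a)) g)
    = (\<Sum>c | c \<subseteq># m. opser_mult Y A c f * B (m - c) g)"
proof -
  have "(\<Sum>c | c \<subseteq># m. opser_mult Y A c f * B (m - c) g)
      = (\<Sum>c | c \<subseteq># m. \<Sum>b | b \<subseteq># c. Y b (A (c - b) f) * B (m - (b + (c - b))) g)"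
    by (intro sum.cong refl) (auto simp: opser_mult_def sum_distrib_right subset_mset.add_diff_inverse
        intro: sum.cong)
  also have "\<dots> = (\<Sum>b | b \<subseteq># m. \<Sum>a | a \<subseteq># m - b. Y b (A a f) * B (m - (b + a)) g)"
    by (rule sum_submultisets_assoc)
  finally show ?thesis
    by simp
qed

lemma sum_opser_mult_right:
  fixes Y A B :: "('i, 'r::comm_semiring_0) op_series"
  shows "(\<Sum>b | b \<subseteq># m. \<Sum>a | a \<subseteq># m - b. A a f * Y b (B (m - (b + a)) g))
    = (\<Sum>a | a \<subseteq># m. A a f * opser_mult Y B (m - a) g)"
  by (subst sum_submultisets_swap)
    (simp add: opser_mult_def sum_distrib_left add.commute)

lemma sum_Suc_choose_pascal:
  fixes W :: "nat \<Rightarrow> nat \<Rightarrow> 'a::comm_semiring_1"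
  shows "(\<Sum>i\<le>Suc k. of_nat (Suc k choose i) * W i (Suc k - i))
       = (\<Sum>i\<le>k. of_nat (k choose i) * (W (Suc i) (k - i) + W i (Suc k - i)))"
proof -
  have shift: "(\<Sum>i\<le>k. of_nat (k choose i) * W i (Suc k - i))
      = W 0 (Suc k) + (\<Sum>i\<le>k. of_nat (k choose Suc i) * W (Suc i) (k - i))"
    using sum.atMost_Suc_shift[of "\<lambda>i. of_nat (k choose i) * W i (Suc k - i)" k]
    by (simp add: binomial_eq_0)
  show ?thesis
    by (subst sum.atMost_Suc_shift) (simp add: shift algebra_simps sum.distrib)
qed

lemma opser_pow_leibniz:
  fixes Y :: "('i, 'r::comm_ring_1) op_series"
  assumes derivation: "\<And>m. derivation (Y m)"
  shows "opser_pow Y k m (f * g)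
    = (\<Sum>i\<le>k. of_nat (k choose i) * (\<Sum>a | a \<subseteq># m. opser_pow Y i a f * opser_pow Y (k - i) (m - a) g))"
proof (induction k arbitrary: m)
  case 0
  have "(\<Sum>a | a \<subseteq># m. opser_one a f * opser_one (m - a) g)
      = (\<Sum>a | a \<subseteq># m. if a = {#} then f * opser_one m g else 0)"
    by (rule sum.cong) (auto simp: opser_one_def)
  then show ?case
    by (simp add: sum.delta') (simp add: opser_one_def)
next
  case (Suc k)
  let ?P = "opser_pow Y"
  define W where "W i j = (\<Sum>a | a \<subseteq># m. ?P i a f * ?P j (m - a) g)" for i j
  have additive: "additive (Y b)" for b
    using derivation by (rule derivation.axioms)
  have "?P (Suc k) m (f * g) = (\<Sum>b | b \<subseteq># m. \<Sum>i\<le>k. of_nat (k choose i) *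
       (\<Sum>a | a \<subseteq># m - b. Y b (?P i a f) * ?P (k - i) (m - b - a) g
                               + ?P i a f * Y b (?P (k - i) (m - b - a) g)))"
    by (simp only: opser_pow.simps opser_mult_def Suc.IH additive.sum[OF additive]
        additive_of_nat_mult[OF additive]) (simp only: derivation.leibniz[OF derivation])
  also have "\<dots> = (\<Sum>i\<le>k. of_nat (k choose i) *
       ((\<Sum>b | b \<subseteq># m. \<Sum>a | a \<subseteq># m - b. Y b (?P i a f) * ?P (k - i) (m - b - a) g)
      + (\<Sum>b | b \<subseteq># m. \<Sum>a | a \<subseteq># m - b. ?P i a f * Y b (?P (k - i) (m - b - a) g))))"
    by (subst sum.swap) (simp add: sum_distrib_left sum.distrib ring_distribs)
  also have "\<dots> = (\<Sum>i\<le>k. of_nat (k choose i) * (W (Suc i) (k - i) + W i (Suc k - i)))"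
    by (intro sum.cong refl) (simp add: W_def sum_opser_mult_left sum_opser_mult_right Suc_diff_le)
  also have "\<dots> = (\<Sum>i\<le>Suc k. of_nat (Suc k choose i) * W i (Suc k - i))"
    by (rule sum_Suc_choose_pascal[symmetric])
  finally show ?case
    by (simp add: W_def)
qed

lemma comm_ring_hom_inverse_fact_choose:
  fixes \<kappa> :: "'a::field_char_0 \<Rightarrow> 'b::comm_ring_1"
  assumes \<kappa>: "comm_ring_hom \<kappa>" and "i \<le> j"
  shows "\<kappa> (1 / fact j) * of_nat (j choose i) = \<kappa> (1 / fact i) * \<kappa> (1 / fact (j - i))"
proof -
  have "1 / fact j * of_nat (j choose i) = 1 / fact i * (1 / fact (j - i) :: 'a)"
    using binomial_fact[OF assms(2)] by (simp add: field_simps)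
  then show ?thesis
    by (metis comm_ring_hom.hom_mult[OF \<kappa>] comm_ring_hom.hom_of_nat[OF \<kappa>])
qed

lemma opser_exp_multiplicative:
  fixes Y :: "('i, 'r::comm_ring_1) op_series"
  assumes \<kappa>: "comm_ring_hom \<kappa>" and Y0: "Y {#} = (\<lambda>q. 0)" and derivation: "\<And>m. derivation (Y m)"
  shows "opser_multiplicative (opser_exp \<kappa> Y)"
  unfolding opser_multiplicative_def
proof (intro allI)
  fix m f g
  have additive: "\<And>m. additive (Y m)"
    using derivation by (rule derivation.axioms)
  define c where "c i = \<kappa> (1 / fact i)" for i
  define T where "T a i j = c i * c j * (opser_pow Y i a f * opser_pow Y j (m - a) g)" for a i j
  define W where "W i j = (\<Sum>a | a \<subseteq># m. opser_pow Y i a f * opser_pow Y j (m - a) g)" for i j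
  let ?n = "size m"
  have "opser_exp \<kappa> Y m (f * g) = (\<Sum>j\<le>?n. \<Sum>i\<le>j. c j * of_nat (j choose i) * W i (j - i))"
    by (simp add: opser_exp_def opser_pow_leibniz[OF derivation] W_def c_def sum_distrib_left
        mult.assoc)
  also have "\<dots> = (\<Sum>j\<le>?n. \<Sum>i\<le>j. c i * c (j - i) * W i (j - i))"
    by (intro sum.cong refl) (simp add: c_def comm_ring_hom_inverse_fact_choose[OF \<kappa>])
  also have "\<dots> = (\<Sum>(i, j) | i + j \<le> ?n. c i * c j * W i j)"
    by (rule sum.triangle_reindex_eq[symmetric])
  also have "\<dots> = (\<Sum>a | a \<subseteq># m. \<Sum>(i, j) | i + j \<le> ?n. T a i j)"
    unfolding W_def T_def sum_distrib_left case_prod_unfold by (rule sum.swap)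
  also have "\<dots> = (\<Sum>a | a \<subseteq># m. \<Sum>(i, j)\<in>{..size a} \<times> {..size (m - a)}. T a i j)"
  proof (rule sum.cong[OF refl])
    fix a assume "a \<in> {a. a \<subseteq># m}"
    then have size_a: "size a + size (m - a) = ?n"
      by (simp add: size_Diff_submset size_mset_mono)
    have "T a i j = 0" if "(i, j) \<notin> {..size a} \<times> {..size (m - a)}" for i j
      using that opser_pow_eq_0_below_size[where X=Y, OF Y0 additive] by (auto simp: T_def not_le)
    then show "(\<Sum>(i, j) | i + j \<le> ?n. T a i j) = (\<Sum>(i, j)\<in>{..size a} \<times> {..size (m - a)}. T a i j)"
      using size_a by (intro sum.mono_neutral_right) (auto intro: finite_subset[of _ "{..?n} \<times> {..?n}"])
  qed
  also have "\<dots> = (\<Sum>a | a \<subseteq># m. opser_exp \<kappa> Y a f * opser_exp \<kappa> Y (m - a) g)"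
    by (simp add: opser_exp_def sum_product T_def c_def sum.cartesian_product algebra_simps)
  finally show "opser_exp \<kappa> Y m (f * g) = (\<Sum>a | a \<subseteq># m. opser_exp \<kappa> Y a f * opser_exp \<kappa> Y (m - a) g)" .
qed

lemma opser_trunc_log_empty:
  "comm_ring_hom \<kappa> \<Longrightarrow> G {#} = id \<Longrightarrow> opser_trunc s (opser_log \<kappa> G) {#} = (\<lambda>q. 0)"
  by (simp add: opser_trunc_def opser_log_empty)

lemma opser_exp_trunc_log_below_size:
  assumes \<kappa>: "comm_ring_hom \<kappa>" and G0: "G {#} = id" and additive: "\<And>m. additive (G m)"
    and "size a < s"
  shows "opser_exp \<kappa> (opser_trunc s (opser_log \<kappa> G)) a = G a"
  using opser_exp_trunc_below_size[where X="opser_log \<kappa> G", OF opser_log_empty[where G=G, OF \<kappa> G0]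
      additive_opser_log[where G=G, OF additive] \<open>size a < s\<close>]
    opser_exp_log[where G=G, OF \<kappa> G0 additive]
  by simp

text \<open>Writing \<open>E\<close> for the exponential of the logarithm truncated below the size of \<open>m\<close>,
  we have \<open>log G m = G m - E m\<close>, and \<open>G\<close> and \<open>E\<close> are multiplicative and agree below \<open>m\<close>.
  Comparing their product rules, only the terms for the trivial splittings of \<open>m\<close> survive,
  and these form the Leibniz rule.\<close>

lemma derivation_opser_log:
  fixes G :: "('i, 'r::comm_ring_1) op_series"
  assumes \<kappa>: "comm_ring_hom \<kappa>" and G0: "G {#} = id" and additive: "\<And>m. additive (G m)"
    and G_mult: "opser_multiplicative G"
  shows "derivation (opser_log \<kappa> G m)"
proof (induction rule: opser_log_induct)
  case (less m)
  let ?E = "opser_exp \<kappa> (opser_trunc (size m) (opser_log \<kappa> G))"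
  have E_mult: "opser_multiplicative ?E"
    by (rule opser_exp_multiplicative[where Y="opser_trunc (size m) (opser_log \<kappa> G)",
          OF \<kappa> opser_trunc_log_empty[where G=G, OF \<kappa> G0] less])
  have E_below: "?E a = G a" if "size a < size m" for a
    by (rule opser_exp_trunc_log_below_size[where G=G, OF \<kappa> G0 additive that])
  have log_m: "opser_log \<kappa> G m q = G m q - ?E m q" for q
    by (simp add: opser_log_eq)
  show ?case
  proof (cases "m = {#}")
    case True
    then show ?thesis
      using derivation_zero by (simp add: opser_log_empty[where G=G, OF \<kappa> G0])
  next
    case False
    define d where "d a f g = G a f * G (m - a) g - ?E a f * ?E (m - a) g" for a f g
    have "d a f g = 0" if "a \<subseteq># m" "a \<notin> {{#}, m}" for a f g
    proof -
      have "0 < size a" "size a < size m"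
        using that by (auto simp: nonempty_has_size dest: subset_mset.le_imp_less_or_eq
            mset_subset_size)
      then have "size (m - a) < size m"
        using that by (simp add: size_Diff_submset)
      with \<open>size a < size m\<close> show ?thesis
        by (simp add: d_def E_below)
    qed
    then have "(\<Sum>a | a \<subseteq># m. d a f g) = (\<Sum>a\<in>{{#}, m}. d a f g)" for f g
      by (intro sum.mono_neutral_right) auto
    moreover have "opser_log \<kappa> G m (f * g) = (\<Sum>a | a \<subseteq># m. d a f g)" for f g
      using G_mult E_mult by (simp add: log_m d_def opser_multiplicative_def sum_subtractf)
    moreover have "d {#} f g + d m f g = opser_log \<kappa> G m f * g + f * opser_log \<kappa> G m g" for f g
      using G0 by (simp add: d_def log_m opser_exp_empty[OF \<kappa>] algebra_simps)
    ultimately have "opser_log \<kappa> G m (f * g) = opser_log \<kappa> G m f * g + f * opser_log \<kappa> G m g" for f g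
      using False by simp
    then show ?thesis
      by (intro derivation.intro derivation_axioms.intro additive_opser_log additive)
  qed
qed (rule derivation_zero)

text \<open>For a derivation \<open>Q\<close> of a domain, \<open>preserves_ratio N D Q\<close> says that \<open>Q\<close> kills
  the fraction \<open>N / D\<close>.\<close>

definition preserves_ratio :: "'r::comm_ring_1 \<Rightarrow> 'r \<Rightarrow> ('r \<Rightarrow> 'r) \<Rightarrow> bool" where
  "preserves_ratio N D Q \<longleftrightarrow> Q N * D = N * Q D"

lemma preserves_ratio_comp:
  fixes Y Q :: "'r::idom \<Rightarrow> 'r"
  assumes "D \<noteq> 0" and "derivation Y" and "preserves_ratio N D Y" and "preserves_ratio N D Q"
  shows "preserves_ratio N D (\<lambda>q. Y (Q q))"
proof -
  have Q: "Q N * D = N * Q D" and Y: "Y N * D = N * Y D"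
    using assms(3,4) by (auto simp: preserves_ratio_def)
  have "Q N * Y D * D = Y N * Q D * D"
    by (metis Q Y mult.assoc mult.commute)
  then have "Q N * Y D = Y N * Q D"
    using \<open>D \<noteq> 0\<close> by simp
  moreover have "Y (Q N) * D + Q N * Y D = Y N * Q D + N * Y (Q D)"
    using arg_cong[OF Q, of Y] by (simp add: derivation.leibniz[OF assms(2)])
  ultimately show ?thesis
    by (simp add: preserves_ratio_def)
qed

lemma preserves_ratio_sum:
  "(\<And>s. s \<in> S \<Longrightarrow> preserves_ratio N D (F s)) \<Longrightarrow> preserves_ratio N D (\<lambda>q. \<Sum>s\<in>S. F s q)"
  by (simp add: preserves_ratio_def sum_distrib_left sum_distrib_right)

lemma preserves_ratio_scale: "preserves_ratio N D Q \<Longrightarrow> preserves_ratio N D (\<lambda>q. c * Q q)"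
  unfolding preserves_ratio_def by (metis mult.assoc mult.left_commute)

lemma preserves_ratio_diff:
  "preserves_ratio N D P \<Longrightarrow> preserves_ratio N D Q \<Longrightarrow> preserves_ratio N D (\<lambda>q. P q - Q q)"
  by (simp add: preserves_ratio_def algebra_simps)

lemma preserves_ratio_opser_one: "preserves_ratio N D (opser_one m)"
  by (simp add: preserves_ratio_def opser_one_def)

lemma preserves_ratio_opser_exp:
  fixes Y :: "('i, 'r::idom) op_series"
  assumes "D \<noteq> 0" and "\<And>m. derivation (Y m)" and "\<And>m. preserves_ratio N D (Y m)"
  shows "preserves_ratio N D (opser_exp \<kappa> Y m)"
proof -
  have "preserves_ratio N D (opser_pow Y k m)" for k
  proof (induction k arbitrary: m)
    case (Suc k)
    show ?case
      unfolding opser_pow.simps opser_mult_def[abs_def]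
      by (rule preserves_ratio_sum, rule preserves_ratio_comp[OF assms(1) assms(2,3) Suc.IH])
  qed (simp add: preserves_ratio_opser_one)
  then show ?thesis
    unfolding opser_exp_def[abs_def] by (auto intro!: preserves_ratio_sum preserves_ratio_scale)
qed

lemma preserves_ratio_opser_log:
  fixes G :: "('i, 'r::idom) op_series"
  assumes \<kappa>: "comm_ring_hom \<kappa>" and G0: "G {#} = id" and additive: "\<And>m. additive (G m)"
    and G_mult: "opser_multiplicative G" and "D \<noteq> 0" and G_ratio: "\<And>m. preserves_ratio N D (G m)"
  shows "preserves_ratio N D (opser_log \<kappa> G m)"
proof (induction rule: opser_log_induct)
  case (less m)
  have "derivation (opser_trunc (size m) (opser_log \<kappa> G) a)" for a
    by (cases "size a < size m")
      (simp_all add: opser_trunc_def derivation_zero derivation_opser_log[OF \<kappa> G0 additive G_mult])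
  then have "preserves_ratio N D (opser_exp \<kappa> (opser_trunc (size m) (opser_log \<kappa> G)) m)"
    by (rule preserves_ratio_opser_exp[OF \<open>D \<noteq> 0\<close> _ less])
  then show ?case
    using preserves_ratio_diff[OF G_ratio] by (simp add: opser_log_eq)
qed (simp add: preserves_ratio_def)

section \<open>Words and shuffles\<close>

definition word_action :: "('j \<Rightarrow> 'r \<Rightarrow> 'r) \<Rightarrow> 'j list \<Rightarrow> 'r \<Rightarrow> 'r" where
  "word_action L js = foldr (\<lambda>j f. L j \<circ> f) js id"

lemma word_action_Nil [simp]: "word_action L [] = id"
  by (simp add: word_action_def)

lemma word_action_Cons [simp]: "word_action L (j # js) = L j \<circ> word_action L js"
  by (simp add: word_action_def)

lemma word_op_eq_word_action: "word_op = word_action letter_op"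
  by (simp add: fun_eq_iff word_op_def word_action_def)

lemma Pow_lessThan_Suc:
  "Pow {..<Suc n} = (\<lambda>I. insert 0 (Suc ` I)) ` Pow {..<n} \<union> (\<lambda>I. Suc ` I) ` Pow {..<n}"
proof (intro set_eqI iffI)
  fix J assume J: "J \<in> Pow {..<Suc n}"
  have "J = (if 0 \<in> J then insert 0 (Suc ` {j. Suc j \<in> J}) else Suc ` {j. Suc j \<in> J})"
    by (auto simp: image_iff) (metis not0_implies_Suc)+
  moreover have "{j. Suc j \<in> J} \<in> Pow {..<n}"
    using J by auto
  ultimately show "J \<in> (\<lambda>I. insert 0 (Suc ` I)) ` Pow {..<n} \<union> (\<lambda>I. Suc ` I) ` Pow {..<n}"
    by (metis (no_types, lifting) UnI1 UnI2 image_eqI)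
qed auto

lemma inj_on_insert_0_image_Suc: "inj_on (\<lambda>I. insert 0 (Suc ` I)) X"
proof (rule inj_onI)
  fix I J assume "insert 0 (Suc ` I) = insert (0::nat) (Suc ` J)"
  then have "{k. Suc k \<in> insert 0 (Suc ` I)} = {k. Suc k \<in> insert 0 (Suc ` J)}"
    by simp
  then show "I = J"
    by auto
qed

lemma word_action_mult:
  fixes L :: "'j \<Rightarrow> 'r::comm_ring_1 \<Rightarrow> 'r"
  assumes derivation: "\<And>j. derivation (L j)"
  shows "word_action L js (f * g) = (\<Sum>I\<in>Pow {..<length js}.
           word_action L (nths js I) f * word_action L (nths js ({..<length js} - I)) g)"
proof (induction js)
  case (Cons j js)
  let ?n = "length js"
  let ?A = "\<lambda>I. word_action L (nths js I) f"
  let ?B = "\<lambda>I. word_action L (nths js ({..<?n} - I)) g"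
  let ?F = "\<lambda>J. word_action L (nths (j # js) J) f * word_action L (nths (j # js) ({..<Suc ?n} - J)) g"
  have "word_action L (j # js) (f * g) = (\<Sum>I\<in>Pow {..<?n}. L j (?A I) * ?B I + ?A I * L j (?B I))"
    using Cons by (simp add: additive.sum[OF derivation.axioms(1)[OF derivation]]
        derivation.leibniz[OF derivation])
  also have "\<dots> = (\<Sum>I\<in>Pow {..<?n}. ?F (insert 0 (Suc ` I))) + (\<Sum>I\<in>Pow {..<?n}. ?F (Suc ` I))"
  proof -
    have "{k. Suc k \<in> insert 0 (Suc ` I)} = I"
      "{k. Suc k \<in> {..<Suc ?n} - insert 0 (Suc ` I)} = {..<?n} - I"
      "{k. Suc k \<in> Suc ` I} = I" "{k. Suc k \<in> {..<Suc ?n} - Suc ` I} = {..<?n} - I" for I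
      by auto
    then show ?thesis
      by (simp add: sum.distrib nths_Cons)
  qed
  also have "\<dots> = sum ?F (Pow {..<Suc ?n})"
  proof -
    have "inj_on (\<lambda>I. Suc ` I) X" for X :: "nat set set"
      by (simp add: inj_on_def inj_image_eq_iff)
    then show ?thesis
      unfolding Pow_lessThan_Suc
      by (subst sum.union_disjoint) (auto simp: sum.reindex inj_on_insert_0_image_Suc)
  qed
  finally show ?case
    by simp
qed simp

lemma mset_nths_add_mset_nths_compl:
  "mset (nths w I) + mset (nths w ({..<length w} - I)) = mset w"
proof (induction w arbitrary: I)
  case (Cons x w)
  have "{j. Suc j \<in> {..<length (x # w)} - I} = {..<length w} - {j. Suc j \<in> I}"
    by auto
  then show ?case
    using Cons.IH[of "{j. Suc j \<in> I}"] by (simp add: nths_Cons)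
qed simp

lemma nths_in_shuffles: "w \<in> shuffles (nths w I) (nths w ({..<length w} - I))"
proof (induction w arbitrary: I)
  case (Cons x w)
  have "{j. Suc j \<in> {..<length (x # w)} - I} = {..<length w} - {j. Suc j \<in> I}"
    by auto
  then show ?case
    using Cons.IH[of "{j. Suc j \<in> I}"]
    by (simp add: nths_Cons Cons_in_shuffles_leftI Cons_in_shuffles_rightI)
qed simp

lemma length_nths_eq_card: "I \<subseteq> {..<length w} \<Longrightarrow> length (nths w I) = card I"
proof -
  assume "I \<subseteq> {..<length w}"
  then have "{i. i < length w \<and> i \<in> I} = I"
    by auto
  then show ?thesis
    by (simp add: length_nths)
qed

definition shuffle_positions :: "'a list \<Rightarrow> 'a list \<Rightarrow> 'a list \<Rightarrow> nat set set" where
  "shuffle_positions u v w = {I. I \<subseteq> {..<length w} \<and> card I = length u \<and>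
      nths w I = u \<and> nths w ({..<length w} - I) = v}"

lemma shuffle_mult_eq_card: "shuffle_mult u v w = card (shuffle_positions u v w)"
  by (simp add: shuffle_mult_def shuffle_positions_def)

lemma finite_shuffle_positions [simp]: "finite (shuffle_positions u v w)"
  by (rule finite_subset[of _ "Pow {..<length w}"]) (auto simp: shuffle_positions_def)

text \<open>Both sides run over a word together with a set of its positions: a shuffle \<open>w\<close> of \<open>u\<close> and
  \<open>v\<close> together with the positions of \<open>u\<close> in it.\<close>

lemma sum_shuffles_shuffle_mult:
  fixes F :: "'a list \<Rightarrow> 'a list \<Rightarrow> 'a list \<Rightarrow> 'b::comm_semiring_1"
  assumes "finite P" and "finite W"
    and shuffles_in: "\<And>u v. (u, v) \<in> P \<Longrightarrow> shuffles u v \<subseteq> W"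
    and split_in: "\<And>w I. w \<in> W \<Longrightarrow> I \<subseteq> {..<length w} \<Longrightarrow> (nths w I, nths w ({..<length w} - I)) \<in> P"
  shows "(\<Sum>(u, v)\<in>P. \<Sum>w\<in>shuffles u v. of_nat (shuffle_mult u v w) * F u v w)
       = (\<Sum>w\<in>W. \<Sum>I\<in>Pow {..<length w}. F (nths w I) (nths w ({..<length w} - I)) w)"
proof -
  let ?C = "\<lambda>w I. {..<length w} - I"
  have "(\<Sum>(u, v)\<in>P. \<Sum>w\<in>shuffles u v. of_nat (shuffle_mult u v w) * F u v w)
      = (\<Sum>(u, v)\<in>P. \<Sum>(w, I)\<in>Sigma (shuffles u v) (shuffle_positions u v). F u v w)"
    by (intro sum.cong refl) (auto simp: shuffle_mult_eq_card sum.Sigma[symmetric])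
  also have "\<dots> = (\<Sum>((u, v), w, I)\<in>Sigma P (\<lambda>(u, v). Sigma (shuffles u v) (shuffle_positions u v)).
      F u v w)"
    using \<open>finite P\<close> by (simp add: sum.Sigma case_prod_unfold)
  also have "\<dots> = (\<Sum>(w, I)\<in>Sigma W (\<lambda>w. Pow {..<length w}). F (nths w I) (nths w (?C w I)) w)"
    by (rule sum.reindex_bij_witness[of _ "\<lambda>(w, I). ((nths w I, nths w (?C w I)), w, I)" snd])
      (use split_in nths_in_shuffles in \<open>auto simp: shuffle_positions_def length_nths_eq_card
          intro: subsetD[OF shuffles_in]\<close>)
  also have "\<dots> = (\<Sum>w\<in>W. \<Sum>I\<in>Pow {..<length w}. F (nths w I) (nths w (?C w I)) w)"
    using \<open>finite W\<close> by (subst sum.Sigma) auto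
  finally show ?thesis .
qed

lemma shuffles_map: "shuffles (map f u) (map f v) = map f ` shuffles u v"
  by (induction u v rule: shuffles.induct) (auto simp: image_Un image_image)

definition grouplike_on :: "'a set \<Rightarrow> ('a list \<Rightarrow> complex) \<Rightarrow> bool" where
  "grouplike_on A T \<longleftrightarrow> T [] = 1 \<and> (\<forall>u v. set u \<subseteq> A \<longrightarrow> set v \<subseteq> A \<longrightarrow>
      T u * T v = (\<Sum>w\<in>shuffles u v. T w * of_nat (shuffle_mult u v w)))"

lemma grouplike_imp_grouplike_on: "grouplike S \<Longrightarrow> grouplike_on A S"
  by (auto simp: grouplike_def grouplike_on_def coproduct_def fun_eq_iff)

lemma grouplike_on_map:
  assumes "inj_on f A" and "grouplike_on (f ` A) S"
  shows "grouplike_on A (\<lambda>w. S (map f w))"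
  unfolding grouplike_on_def
proof (intro conjI allI impI)
  show "S (map f []) = 1"
    using assms(2) by (simp add: grouplike_on_def)
  fix u v assume u: "set u \<subseteq> A" and v: "set v \<subseteq> A"
  have inj_words: "inj_on f (set w1 \<union> set w2)" if "set w1 \<subseteq> A" "set w2 \<subseteq> A" for w1 w2
    using that by (intro inj_on_subset[OF assms(1)]) simp
  have in_A: "set w \<subseteq> A" if "w \<in> shuffles u v" for w
    using set_shuffles[OF that] u v by simp
  have inj_map: "inj_on (map f) (shuffles u v)"
    by (rule inj_onI) (use in_A inj_words inj_on_map_eq_map in blast)
  have "shuffle_mult (map f u) (map f v) (map f w) = shuffle_mult u v w" if "w \<in> shuffles u v" for w
  proof -
    have sub: "set (nths w I) \<subseteq> A" for I
      using in_A[OF that] set_nths_subset[of w I] by blast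
    have "(map f (nths w I) = map f u) = (nths w I = u)" "(map f (nths w I) = map f v) = (nths w I = v)"
      for I
      using inj_on_map_eq_map[OF inj_words[OF sub u]] inj_on_map_eq_map[OF inj_words[OF sub v]] by auto
    then show ?thesis
      by (simp add: shuffle_mult_def nths_map)
  qed
  moreover have "set (map f u) \<subseteq> f ` A" "set (map f v) \<subseteq> f ` A"
    using u v by auto
  then have "S (map f u) * S (map f v)
      = (\<Sum>w'\<in>shuffles (map f u) (map f v). S w' * of_nat (shuffle_mult (map f u) (map f v) w'))"
    using assms(2) by (simp add: grouplike_on_def)
  ultimately show "S (map f u) * S (map f v)
      = (\<Sum>w\<in>shuffles u v. S (map f w) * of_nat (shuffle_mult u v w))"
    by (simp add: shuffles_map sum.reindex[OF inj_map])
qed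

text \<open>A letter \<open>(i, j)\<close> of \<open>A\<close> contributes the variable \<open>\<rho>_i\<close> and acts by the operator \<open>L j\<close>;
  the coefficient of the monomial \<open>m\<close> collects the words whose letters carry the variables \<open>m\<close>.\<close>

definition words_of_content :: "('i \<times> 'j) set \<Rightarrow> 'i multiset \<Rightarrow> ('i \<times> 'j) list set" where
  "words_of_content A m = {w. set w \<subseteq> A \<and> mset (map fst w) = m}"

definition word_series ::
  "(complex \<Rightarrow> 'r::comm_ring_1) \<Rightarrow> ('j \<Rightarrow> 'r \<Rightarrow> 'r) \<Rightarrow> ('i \<times> 'j) set \<Rightarrow> (('i \<times> 'j) list \<Rightarrow> complex)
    \<Rightarrow> ('i, 'r) op_series"
  where "word_series \<kappa> L A T m q = (\<Sum>w\<in>words_of_content A m. \<kappa> (T w) * word_action L (map snd w) q)"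

lemma finite_words_of_content [simp]: "finite A \<Longrightarrow> finite (words_of_content A m)"
  by (rule finite_subset[of _ "{w. set w \<subseteq> A \<and> length w \<le> size m}"])
    (auto simp: words_of_content_def dest: arg_cong[where f=size] intro: finite_lists_length_le)

lemma words_of_content_empty [simp]: "words_of_content A {#} = {[]}"
  by (auto simp: words_of_content_def)

lemma Dmap_eq_word_series:
  "Dmap n h S = word_series (\<lambda>c. [:c:]) letter_op ({..<n} \<times> {..2}) (\<lambda>w. S (map (\<lambda>(i, j). (h i, j)) w))"
  by (simp add: fun_eq_iff Dmap_def word_series_def words_of_content_def word_op_eq_word_action)

lemma word_series_empty: "comm_ring_hom \<kappa> \<Longrightarrow> grouplike_on A T \<Longrightarrow> word_series \<kappa> L A T {#} = id"
  by (simp add: fun_eq_iff word_series_def grouplike_on_def comm_ring_hom.hom_one)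

lemma additive_word_series:
  assumes "\<And>j. additive (L j)"
  shows "additive (word_series \<kappa> L A T m)"
proof -
  have "additive (word_action L js)" for js
    using assms by (induction js) (simp_all add: additive_def)
  then show ?thesis
    by unfold_locales (simp add: word_series_def additive.add sum.distrib algebra_simps)
qed

lemma word_series_outside:
  assumes "\<not> set_mset m \<subseteq> fst ` A"
  shows "word_series \<kappa> L A T m = (\<lambda>q. 0)"
proof -
  have "words_of_content A m = {}"
    using assms by (auto simp: words_of_content_def) (metis fst_conv image_eqI subsetD)
  then show ?thesis
    by (simp add: fun_eq_iff word_series_def)
qed

lemma intertwines_word_series:
  assumes "additive \<iota>" and "\<And>c x. \<iota> (\<kappa> c * x) = \<kappa>' c * \<iota> x" and "\<And>j x. L' j (\<iota> x) = \<iota> (L j x)"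
  shows "intertwines \<iota> (word_series \<kappa> L A T) (word_series \<kappa>' L' A T)"
proof -
  have "word_action L' js (\<iota> x) = \<iota> (word_action L js x)" for js x
    using assms(3) by (induction js arbitrary: x) simp_all
  then show ?thesis
    using assms(1,2) by (simp add: intertwines_def word_series_def additive.sum)
qed

lemma preserves_ratio_word_series:
  fixes L :: "'j \<Rightarrow> 'r::idom \<Rightarrow> 'r"
  assumes "D \<noteq> 0" and "\<And>j. j \<in> snd ` A \<Longrightarrow> derivation (L j)"
    and "\<And>j. j \<in> snd ` A \<Longrightarrow> preserves_ratio N D (L j)"
  shows "preserves_ratio N D (word_series \<kappa> L A T m)"
proof -
  have "preserves_ratio N D (word_action L js)" if "set js \<subseteq> snd ` A" for js
    using that
  proof (induction js)
    case (Cons j js)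
    then show ?case
      using preserves_ratio_comp[OF assms(1) assms(2,3) Cons.IH] by (simp add: comp_def)
  qed (simp add: preserves_ratio_def)
  then show ?thesis
    unfolding word_series_def[abs_def]
    by (intro preserves_ratio_sum preserves_ratio_scale) (auto simp: words_of_content_def image_mono)
qed

definition word_pairs :: "('i \<times> 'j) set \<Rightarrow> 'i multiset \<Rightarrow> (('i \<times> 'j) list \<times> ('i \<times> 'j) list) set" where
  "word_pairs A m = {(u, v). set u \<subseteq> A \<and> set v \<subseteq> A \<and> mset (map fst u) + mset (map fst v) = m}"

lemma finite_word_pairs: "finite A \<Longrightarrow> finite (word_pairs A m)"
proof -
  assume "finite A"
  have "length u \<le> size m \<and> length v \<le> size m" if "(u, v) \<in> word_pairs A m" for u v
  proof -
    have "size (mset (map fst u) + mset (map fst v)) = size m"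
      using that by (simp add: word_pairs_def)
    then show ?thesis
      by simp
  qed
  then have "word_pairs A m \<subseteq> {u. set u \<subseteq> A \<and> length u \<le> size m} \<times> {v. set v \<subseteq> A \<and> length v \<le> size m}"
    by (auto simp: word_pairs_def)
  then show ?thesis
    by (rule finite_subset) (intro finite_cartesian_product finite_lists_length_le \<open>finite A\<close>)
qed

lemma shuffles_subset_words_of_content:
  assumes "(u, v) \<in> word_pairs A m"
  shows "shuffles u v \<subseteq> words_of_content A m"
proof
  fix w assume w: "w \<in> shuffles u v"
  then have "map fst w \<in> shuffles (map fst u) (map fst v)"
    by (simp add: shuffles_map)
  then have "mset (map fst w) = mset (map fst u) + mset (map fst v)"
    by (rule mset_shuffles)
  then show "w \<in> words_of_content A m"
    using assms set_shuffles[OF w] by (auto simp: words_of_content_def word_pairs_def)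
qed

lemma nths_in_word_pairs:
  "w \<in> words_of_content A m \<Longrightarrow> (nths w I, nths w ({..<length w} - I)) \<in> word_pairs A m"
  using set_nths_subset[of w] mset_nths_add_mset_nths_compl[of "map fst w" I]
  by (auto simp: words_of_content_def word_pairs_def nths_map)

lemma sum_words_of_content_split:
  assumes "finite A"
  shows "(\<Sum>a | a \<subseteq># m. \<Sum>u\<in>words_of_content A a. \<Sum>v\<in>words_of_content A (m - a). H u v)
    = (\<Sum>(u, v)\<in>word_pairs A m. H u v)"
proof -
  have "(\<Sum>a | a \<subseteq># m. \<Sum>u\<in>words_of_content A a. \<Sum>v\<in>words_of_content A (m - a). H u v)
      = (\<Sum>(a, u, v)\<in>Sigma {a. a \<subseteq># m} (\<lambda>a. words_of_content A a \<times> words_of_content A (m - a)). H u v)"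
    using assms by (simp add: sum.cartesian_product sum.Sigma)
  also have "\<dots> = (\<Sum>(u, v)\<in>word_pairs A m. H u v)"
    by (rule sum.reindex_bij_witness[of _ "\<lambda>(u, v). (mset (map fst u), u, v)" "\<lambda>(a, u, v). (u, v)"])
      (auto simp: words_of_content_def word_pairs_def subset_mset.add_diff_inverse)
  finally show ?thesis .
qed

lemma word_series_multiplicative:
  fixes L :: "'j \<Rightarrow> 'r::comm_ring_1 \<Rightarrow> 'r" and A :: "('i \<times> 'j) set"
  assumes \<kappa>: "comm_ring_hom \<kappa>" and derivation: "\<And>j. derivation (L j)" and "finite A"
    and T: "grouplike_on A T"
  shows "opser_multiplicative (word_series \<kappa> L A T)"
  unfolding opser_multiplicative_def
proof (intro allI)
  fix m f g
  let ?P = "word_pairs A m"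
  let ?op = "\<lambda>w. word_action L (map snd w)"
  define F where "F u v w = \<kappa> (T w) * (?op u f * ?op v g)" for u v w :: "('i \<times> 'j) list"
  have "(\<Sum>a | a \<subseteq># m. word_series \<kappa> L A T a f * word_series \<kappa> L A T (m - a) g)
      = (\<Sum>(u, v)\<in>?P. \<kappa> (T u * T v) * (?op u f * ?op v g))"
    unfolding word_series_def sum_product sum_words_of_content_split[OF \<open>finite A\<close>]
    by (intro sum.cong refl) (auto simp: comm_ring_hom.hom_mult[OF \<kappa>] mult_ac)
  also have "\<dots> = (\<Sum>(u, v)\<in>?P. \<Sum>w\<in>shuffles u v. of_nat (shuffle_mult u v w) * F u v w)"
  proof (rule sum.cong[OF refl])
    fix p assume "p \<in> ?P"
    then obtain u v where p: "p = (u, v)" and "set u \<subseteq> A" "set v \<subseteq> A"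
      by (auto simp: word_pairs_def)
    then have "T u * T v = (\<Sum>w\<in>shuffles u v. T w * of_nat (shuffle_mult u v w))"
      using T by (simp add: grouplike_on_def)
    then have "\<kappa> (T u * T v) = (\<Sum>w\<in>shuffles u v. of_nat (shuffle_mult u v w) * \<kappa> (T w))"
      by (simp add: comm_ring_hom.hom_sum[OF \<kappa>] comm_ring_hom.hom_mult[OF \<kappa>]
          comm_ring_hom.hom_of_nat[OF \<kappa>] mult.commute)
    then show "(case p of (u, v) \<Rightarrow> \<kappa> (T u * T v) * (?op u f * ?op v g))
        = (case p of (u, v) \<Rightarrow> \<Sum>w\<in>shuffles u v. of_nat (shuffle_mult u v w) * F u v w)"
      unfolding p by (simp add: F_def sum_distrib_right mult.assoc)
  qed
  also have "\<dots> = (\<Sum>w\<in>words_of_content A m. \<Sum>I\<in>Pow {..<length w}.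
      F (nths w I) (nths w ({..<length w} - I)) w)"
    using \<open>finite A\<close> by (intro sum_shuffles_shuffle_mult finite_word_pairs finite_words_of_content
        shuffles_subset_words_of_content nths_in_word_pairs)
  also have "\<dots> = word_series \<kappa> L A T m (f * g)"
    by (simp add: word_series_def F_def word_action_mult[OF derivation] nths_map
        sum_distrib_left)
  finally show "word_series \<kappa> L A T m (f * g)
      = (\<Sum>a | a \<subseteq># m. word_series \<kappa> L A T a f * word_series \<kappa> L A T (m - a) g)"
    by simp
qed

lemma derivation_opser_log_word_series:
  assumes \<kappa>: "comm_ring_hom \<kappa>" and L: "\<And>j. derivation (L j)" and "finite A"
    and T: "grouplike_on A T"
  shows "derivation (opser_log \<kappa> (word_series \<kappa> L A T) m)"
proof (rule derivation_opser_log[OF \<kappa>])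
  show "word_series \<kappa> L A T {#} = id"
    by (rule word_series_empty[OF \<kappa> T])
  show "additive (word_series \<kappa> L A T m)" for m
    using L by (intro additive_word_series derivation.axioms(1))
  show "opser_multiplicative (word_series \<kappa> L A T)"
    by (rule word_series_multiplicative[OF \<kappa> L \<open>finite A\<close> T])
qed

lemma preserves_ratio_opser_log_word_series:
  fixes L :: "'j \<Rightarrow> 'r::idom \<Rightarrow> 'r"
  assumes \<kappa>: "comm_ring_hom \<kappa>" and L: "\<And>j. derivation (L j)" and "finite A"
    and T: "grouplike_on A T"
    and "D \<noteq> 0" and "\<And>j. j \<in> snd ` A \<Longrightarrow> preserves_ratio N D (L j)"
  shows "preserves_ratio N D (opser_log \<kappa> (word_series \<kappa> L A T) m)"
proof (rule preserves_ratio_opser_log[OF \<kappa>])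
  show "word_series \<kappa> L A T {#} = id"
    by (rule word_series_empty[OF \<kappa> T])
  show "additive (word_series \<kappa> L A T m)" for m
    using L by (intro additive_word_series derivation.axioms(1))
  show "opser_multiplicative (word_series \<kappa> L A T)"
    by (rule word_series_multiplicative[OF \<kappa> L \<open>finite A\<close> T])
  show "preserves_ratio N D (word_series \<kappa> L A T m)" for m
    by (rule preserves_ratio_word_series) (use assms L in auto)
qed (rule \<open>D \<noteq> 0\<close>)

lemma comm_ring_hom_const_poly: "comm_ring_hom (\<lambda>c. [:c:])"
  by unfold_locales (simp_all add: one_pCons)

lemma comm_ring_hom_poly: "comm_ring_hom (\<lambda>p. poly p x)"
  by unfold_locales simp_all

lemma comm_ring_hom_comp: "comm_ring_hom K \<Longrightarrow> comm_ring_hom K' \<Longrightarrow> comm_ring_hom (\<lambda>x. K (K' x))"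
  by (simp add: comm_ring_hom_def comm_ring_hom_axioms_def additive_def)

lemma comm_ring_hom_map_poly:
  assumes K: "comm_ring_hom K"
  shows "comm_ring_hom (map_poly K)"
proof unfold_locales
  have K0: "K 0 = 0"
    using K by (rule comm_ring_hom.hom_zero)
  show "map_poly K (p + q) = map_poly K p + map_poly K q" for p q
    by (rule poly_eqI) (simp add: coeff_map_poly K0 comm_ring_hom.hom_add[OF K])
  show "map_poly K (p * q) = map_poly K p * map_poly K q" for p q
    by (rule poly_eqI) (simp add: coeff_map_poly K0 coeff_mult comm_ring_hom.hom_sum[OF K]
        comm_ring_hom.hom_mult[OF K])
  show "map_poly K 1 = 1"
    by (simp add: comm_ring_hom.hom_one[OF K])
qed

lemma poly_map_poly_pCons: "f 0 = 0 \<Longrightarrow> poly (map_poly f (pCons a q)) x = f a + x * poly (map_poly f q) x"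
  by (simp add: map_poly_pCons)

lemma comm_ring_hom_poly_map_poly:
  assumes "comm_ring_hom H" and "comm_ring_hom \<kappa>"
  shows "H (poly (map_poly \<kappa> q) x) = poly (map_poly (\<lambda>c. H (\<kappa> c)) q) (H x)"
proof (induction q)
  case (pCons a q)
  have "\<kappa> 0 = 0" "H (\<kappa> 0) = 0"
    using comm_ring_hom.hom_zero assms by metis+
  with pCons show ?case
    by (simp add: poly_map_poly_pCons comm_ring_hom.hom_add[OF assms(1)]
        comm_ring_hom.hom_mult[OF assms(1)])
qed (simp add: comm_ring_hom.hom_zero[OF assms(1)])

lemma derivation_poly_map_poly:
  assumes D: "derivation D" and \<kappa>: "comm_ring_hom \<kappa>" and D\<kappa>: "\<And>c. D (\<kappa> c) = 0"
  shows "D (poly (map_poly \<kappa> q) x) = poly (map_poly \<kappa> (pderiv q)) x * D x"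
proof (induction q)
  case (pCons a q)
  have \<kappa>0: "\<kappa> 0 = 0"
    using \<kappa> by (rule comm_ring_hom.hom_zero)
  have "map_poly \<kappa> (pderiv (pCons a q)) = map_poly \<kappa> q + map_poly \<kappa> (pCons 0 (pderiv q))"
    by (simp add: pderiv_pCons comm_ring_hom.hom_add[OF comm_ring_hom_map_poly[OF \<kappa>]])
  with pCons show ?case
    by (simp add: poly_map_poly_pCons \<kappa>0 additive.add[OF derivation.axioms(1)[OF D]]
        derivation.leibniz[OF D] D\<kappa> algebra_simps)
qed (simp add: additive.zero[OF derivation.axioms(1)[OF D]])

definition poly_derivation :: "('a::idom \<Rightarrow> 'a) \<Rightarrow> 'a poly \<Rightarrow> 'a poly \<Rightarrow> 'a poly" where
  "poly_derivation d c p = map_poly d p + c * pderiv p"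

lemma map_poly_derivation_mult:
  assumes "derivation d"
  shows "map_poly d (p * q) = map_poly d p * q + p * map_poly d q"
proof (rule poly_eqI)
  fix n
  have d0: "d 0 = 0"
    using assms by (rule additive.zero[OF derivation.axioms(1)])
  have "d (\<Sum>i\<le>n. coeff p i * coeff q (n - i))
      = (\<Sum>i\<le>n. d (coeff p i) * coeff q (n - i) + coeff p i * d (coeff q (n - i)))"
    by (simp add: additive.sum[OF derivation.axioms(1)[OF assms]] derivation.leibniz[OF assms])
  then show "coeff (map_poly d (p * q)) n = coeff (map_poly d p * q + p * map_poly d q) n"
    by (simp add: coeff_mult coeff_map_poly d0 sum.distrib)
qed

lemma derivation_poly_derivation:
  assumes "derivation d"
  shows "derivation (poly_derivation d c)"
proof unfold_locales
  have add: "map_poly d (p + q) = map_poly d p + map_poly d q" for p q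
    using assms by (intro poly_eqI) (simp add: coeff_map_poly additive.zero[OF derivation.axioms(1)]
        additive.add[OF derivation.axioms(1)])
  show "poly_derivation d c (p + q) = poly_derivation d c p + poly_derivation d c q" for p q
    by (simp add: poly_derivation_def add pderiv_add algebra_simps)
  show "poly_derivation d c (p * q) = poly_derivation d c p * q + p * poly_derivation d c q" for p q
    by (simp add: poly_derivation_def map_poly_derivation_mult[OF assms] pderiv_mult algebra_simps)
qed

lemma poly_derivation_const: "derivation d \<Longrightarrow> poly_derivation d c [:a:] = [:d a:]"
  by (simp add: poly_derivation_def map_poly_pCons additive.zero[OF derivation.axioms(1)])

lemma poly_derivation_var: "derivation d \<Longrightarrow> poly_derivation d c [:0, 1:] = c"
  by (simp add: poly_derivation_def map_poly_pCons pderiv_pCons derivation_one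
      additive.zero[OF derivation.axioms(1)])

lemma letter_op_eq_poly_derivation: "letter_op j = poly_derivation (\<lambda>_. 0) (monom 1 j)"
proof -
  have "map_poly (\<lambda>_. 0 :: complex) p = 0" for p :: "complex poly"
    by (rule poly_eqI) (simp add: coeff_map_poly)
  then show ?thesis
    by (simp add: fun_eq_iff letter_op_def poly_derivation_def)
qed

lemma derivation_letter_op: "derivation (letter_op j)"
  unfolding letter_op_eq_poly_derivation
  by (rule derivation_poly_derivation) (simp add: derivation_zero)

lemma letter_op_const: "letter_op j [:c:] = 0"
  by (simp add: letter_op_def)

lemma letter_op_var: "letter_op j [:0, 1:] = [:0, 1:] ^ j"
  by (simp add: letter_op_def pderiv_pCons monom_altdef)

lemma letter_op_smult: "letter_op j (smult c q) = smult c (letter_op j q)"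
  by (simp add: letter_op_def pderiv_smult)

lemma derivation_eq_mult_pderiv:
  fixes D :: "complex poly \<Rightarrow> complex poly"
  assumes D: "derivation D" and const: "\<And>c. D [:c:] = 0"
  shows "D q = D [:0, 1:] * pderiv q"
proof (induction q)
  case (pCons c q)
  have "pCons c q = [:c:] + [:0, 1:] * q"
    by simp
  then have "D (pCons c q) = D [:0, 1:] * q + [:0, 1:] * D q"
    by (simp only: additive.add[OF derivation.axioms(1)[OF D]] derivation.leibniz[OF D] const) simp
  then show ?case
    using pCons.IH by (simp add: pderiv_pCons algebra_simps)
qed (simp add: additive.zero[OF derivation.axioms(1)[OF D]])

section \<open>Four points on the line\<close>

text \<open>The ring \<open>\<complex>[x\<^sub>1, x\<^sub>2, x\<^sub>3, x\<^sub>4]\<close> is \<open>\<complex>[x\<^sub>1][x\<^sub>2][x\<^sub>3][x\<^sub>4]\<close>, and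
  \<open>diagonal_letter_op j\<close> is the vector field \<open>x\<^sub>1\<^sup>j \<partial>\<^sub>1 + x\<^sub>2\<^sup>j \<partial>\<^sub>2 + x\<^sub>3\<^sup>j \<partial>\<^sub>3 + x\<^sub>4\<^sup>j \<partial>\<^sub>4\<close>,
  by which \<open>\<tau>\<^sup>j \<partial>\<^sub>\<tau>\<close> acts on configurations of four points.\<close>

type_synonym poly4 = "complex poly poly poly poly"

definition const4 :: "complex \<Rightarrow> poly4" where "const4 c = [:[:[:[:c:]:]:]:]"

definition var1 :: poly4 where "var1 = [:[:[:[:0, 1:]:]:]:]"

definition var2 :: poly4 where "var2 = [:[:[:0, 1:]:]:]"

definition var3 :: poly4 where "var3 = [:[:0, 1:]:]"

definition var4 :: poly4 where "var4 = [:0, 1:]"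

definition diagonal_letter_op :: "nat \<Rightarrow> poly4 \<Rightarrow> poly4" where
  "diagonal_letter_op j =
    poly_derivation (poly_derivation (poly_derivation (letter_op j) (monom 1 j)) (monom 1 j))
        (monom 1 j)"

lemma derivation_diagonal_letter_op: "derivation (diagonal_letter_op j)"
  unfolding diagonal_letter_op_def by (intro derivation_poly_derivation derivation_letter_op)

lemma diagonal_letter_op_const4: "diagonal_letter_op j (const4 c) = 0"
  by (simp add: diagonal_letter_op_def const4_def poly_derivation_const derivation_poly_derivation
      derivation_letter_op letter_op_const)

lemma diagonal_letter_op_var:
  "diagonal_letter_op j var1 = var1 ^ j" "diagonal_letter_op j var2 = var2 ^ j"
  "diagonal_letter_op j var3 = var3 ^ j" "diagonal_letter_op j var4 = var4 ^ j"
  by (simp_all add: diagonal_letter_op_def var1_def var2_def var3_def var4_def poly_derivation_const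
      poly_derivation_var derivation_poly_derivation derivation_letter_op letter_op_var monom_altdef
      poly_const_pow)

lemma comm_ring_hom_const4: "comm_ring_hom const4"
  unfolding const4_def by (intro comm_ring_hom_comp[OF comm_ring_hom_const_poly]
      comm_ring_hom_const_poly)

lemma comm_ring_hom_subst4: "comm_ring_hom (\<lambda>q. poly (map_poly const4 q) v)"
  by (rule comm_ring_hom_comp[OF comm_ring_hom_poly comm_ring_hom_map_poly[OF comm_ring_hom_const4]])

lemma diagonal_letter_op_subst4:
  assumes "v \<in> {var1, var2, var3, var4}"
  shows "diagonal_letter_op j (poly (map_poly const4 q) v) = poly (map_poly const4 (letter_op j q)) v"
proof -
  have "diagonal_letter_op j v = v ^ j"
    using assms diagonal_letter_op_var by auto
  moreover have "poly (map_poly const4 (monom 1 j)) v = v ^ j"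
    by (simp add: map_poly_monom comm_ring_hom.hom_zero[OF comm_ring_hom_const4]
        comm_ring_hom.hom_one[OF comm_ring_hom_const4] poly_monom)
  ultimately show ?thesis
    by (simp add: derivation_poly_map_poly[OF derivation_diagonal_letter_op comm_ring_hom_const4]
        diagonal_letter_op_const4 letter_op_def comm_ring_hom.hom_mult[OF comm_ring_hom_subst4])
qed

text \<open>The vector fields \<open>x\<^sup>j \<partial>\<^sub>x\<close> with \<open>j \<le> 2\<close> span \<open>sl\<^sub>2\<close>, which fixes the cross-ratio.\<close>

lemma preserves_cross_ratio:
  fixes L :: "'r::comm_ring_1 \<Rightarrow> 'r"
  assumes L: "derivation L" and "j \<le> 2"
    and "L x1 = x1 ^ j" and "L x2 = x2 ^ j" and "L x3 = x3 ^ j" and "L x4 = x4 ^ j"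
  shows "preserves_ratio ((x1 - x3) * (x2 - x4)) ((x2 - x3) * (x1 - x4)) L"
proof -
  have "j = 0 \<or> j = 1 \<or> j = 2"
    using \<open>j \<le> 2\<close> by auto
  then show ?thesis
    unfolding preserves_ratio_def derivation_diff_mult[OF L] assms(3-6)
    by (elim disjE) (simp_all add: power2_eq_square algebra_simps)
qed

definition specialize :: "poly4 \<Rightarrow> complex poly" where
  "specialize P = poly (poly (poly P 2) 1) 0"

lemma comm_ring_hom_specialize: "comm_ring_hom specialize"
  unfolding specialize_def
  by (rule comm_ring_hom_comp[OF comm_ring_hom_poly
        comm_ring_hom_comp[OF comm_ring_hom_poly comm_ring_hom_poly]])

lemma specialize_const4: "specialize (const4 c) = [:c:]"
  by (simp add: specialize_def const4_def)

lemma specialize_var: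
  "specialize var1 = [:0, 1:]" "specialize var2 = 0" "specialize var3 = 1" "specialize var4 = 2"
  by (simp_all add: specialize_def var1_def var2_def var3_def var4_def)

lemma specialize_subst4: "specialize (poly (map_poly const4 q) v) = pcompose q (specialize v)"
  by (simp add: comm_ring_hom_poly_map_poly[OF comm_ring_hom_specialize comm_ring_hom_const4]
      specialize_const4 pcompose_altdef)

text \<open>The cross-ratio relation for the points \<open>\<tau>, 0, 1, 2\<close>, read as an equation for \<open>p\<close>,
  says that \<open>p\<close> is the quadratic polynomial interpolating its values at \<open>0, 1, 2\<close>.\<close>

lemma degree_le_2_if_cross_ratio_identity:
  fixes p :: "complex poly"
  defines "t \<equiv> [:0, 1:]" and "P a \<equiv> [:poly p a:]"
  assumes "((p - P 1) * (0 - 2) + (t - 1) * (P 0 - P 2)) * ((0 - 1) * (t - 2))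
      = ((t - 1) * (0 - 2)) * ((P 0 - P 1) * (t - 2) + (0 - 1) * (p - P 2))"
  shows "degree p \<le> 2"
proof -
  let ?q = "(t - 1) * (t - 2) * (P 0 - 2 * P 1 + P 2) - 2 * P 1 * (t - 2) + 2 * P 2 * (t - 1)"
  have "2 * p - ?q = ((t - 1) * (0 - 2)) * ((P 0 - P 1) * (t - 2) + (0 - 1) * (p - P 2))
      - ((p - P 1) * (0 - 2) + (t - 1) * (P 0 - P 2)) * ((0 - 1) * (t - 2))"
    by (simp add: algebra_simps)
  then have "2 * p = ?q"
    using assms(3) by simp
  then have "degree (2 * p) \<le> 2"
    by (simp add: t_def P_def numeral_poly one_pCons)
  then show ?thesis
    by (simp add: numeral_poly)
qed

abbreviation cross_num :: poly4 where "cross_num \<equiv> (var1 - var3) * (var2 - var4)"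

abbreviation cross_den :: poly4 where "cross_den \<equiv> (var2 - var3) * (var1 - var4)"

lemma cross_den_nonzero: "cross_den \<noteq> 0"
proof
  assume "cross_den = 0"
  then have "specialize cross_den = 0"
    using comm_ring_hom.hom_zero[OF comm_ring_hom_specialize] by metis
  moreover have "specialize cross_den = (0 - 1) * ([:0, 1:] - 2)"
    by (simp add: comm_ring_hom.hom_mult[OF comm_ring_hom_specialize]
        comm_ring_hom.hom_diff[OF comm_ring_hom_specialize] specialize_var)
  moreover have "coeff ((0 - 1) * ([:0, 1:] - 2 :: complex poly)) 1 \<noteq> 0"
    by (simp add: numeral_poly)
  ultimately show False
    by simp
qed

lemma degree_le_2_if_preserves_cross_ratio:
  assumes D: "derivation D" and ratio: "preserves_ratio cross_num cross_den D"
    and vars: "\<And>v. v \<in> {var1, var2, var3, var4} \<Longrightarrow> D v = poly (map_poly const4 p) v"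
  shows "degree p \<le> 2"
proof (rule degree_le_2_if_cross_ratio_identity)
  let ?s = specialize
  have s: "?s (x * y) = ?s x * ?s y" "?s (x + y) = ?s x + ?s y" "?s (x - y) = ?s x - ?s y" for x y
    by (simp_all add: comm_ring_hom.hom_mult[OF comm_ring_hom_specialize]
        comm_ring_hom.hom_add[OF comm_ring_hom_specialize]
        comm_ring_hom.hom_diff[OF comm_ring_hom_specialize])
  have "?s (poly (map_poly const4 p) var1) = p" "?s (poly (map_poly const4 p) var2) = [:poly p 0:]"
    "?s (poly (map_poly const4 p) var3) = [:poly p 1:]"
    "?s (poly (map_poly const4 p) var4) = [:poly p 2:]"
    by (simp_all add: specialize_subst4 specialize_var pcompose_0' poly_0_coeff_0 flip: pcompose_pCons_0)
      (simp_all add: one_pCons numeral_poly)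
  moreover have "D cross_num * cross_den = cross_num * D cross_den"
    using ratio by (simp add: preserves_ratio_def)
  then have "?s (D cross_num * cross_den) = ?s (cross_num * D cross_den)"
    by simp
  ultimately show "((p - [:poly p 1:]) * (0 - 2) + ([:0, 1:] - 1) * ([:poly p 0:] - [:poly p 2:]))
      * ((0 - 1) * ([:0, 1:] - 2))
    = (([:0, 1:] - 1) * (0 - 2)) * (([:poly p 0:] - [:poly p 1:]) * ([:0, 1:] - 2)
      + (0 - 1) * (p - [:poly p 2:]))"
    by (simp only: s derivation_diff_mult[OF D] vars insert_iff simp_thms specialize_var)
qed

lemma opser_log_word_series_letter_op_eq:
  fixes A :: "('i \<times> nat) set"
  assumes "finite A" and T: "grouplike_on A T"
  defines "X \<equiv> opser_log (\<lambda>c. [:c:]) (word_series (\<lambda>c. [:c:]) letter_op A T)"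
  shows "X m = (\<lambda>q. X m [:0, 1:] * pderiv q)"
proof
  fix q
  have derivation: "derivation (X m)"
    unfolding X_def
    by (rule derivation_opser_log_word_series[OF comm_ring_hom_const_poly derivation_letter_op
        \<open>finite A\<close> T])
  have "intertwines (smult c) X X" for c
    unfolding X_def
    by (intro intertwines_opser_log intertwines_word_series)
      (simp_all add: additive_def smult_add_right mult.commute letter_op_smult)
  then have "X m [:c:] = smult c (X m 1)" for c
    by (metis intertwines_def smult_one)
  then have "X m [:c:] = 0" for c
    using derivation_one[OF derivation] by simp
  then show "X m q = X m [:0, 1:] * pderiv q"
    by (rule derivation_eq_mult_pderiv[OF derivation])
qed

lemma degree_opser_log_word_series_letter_op:
  fixes A :: "('i \<times> nat) set"
  assumes "finite A" and "snd ` A \<subseteq> {..2}" and T: "grouplike_on A T"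
  defines "X \<equiv> opser_log (\<lambda>c. [:c:]) (word_series (\<lambda>c. [:c:]) letter_op A T)"
  shows "degree (X m [:0, 1:]) \<le> 2"
proof (rule degree_le_2_if_preserves_cross_ratio)
  let ?X4 = "opser_log const4 (word_series const4 diagonal_letter_op A T)"
  show "derivation (?X4 m)"
    by (rule derivation_opser_log_word_series[OF comm_ring_hom_const4 derivation_diagonal_letter_op
          \<open>finite A\<close> T])
  show "preserves_ratio cross_num cross_den (?X4 m)"
    using assms(2)
    by (intro preserves_ratio_opser_log_word_series[OF comm_ring_hom_const4
          derivation_diagonal_letter_op \<open>finite A\<close> T cross_den_nonzero]
        preserves_cross_ratio[OF derivation_diagonal_letter_op])
      (auto simp: diagonal_letter_op_var)
  fix v :: poly4
  assume v: "v \<in> {var1, var2, var3, var4}"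
  let ?subst = "\<lambda>q. poly (map_poly const4 q) v"
  have subst_const: "?subst [:c:] = const4 c" for c
    by (cases "c = 0") (simp_all add: map_poly_pCons comm_ring_hom.hom_zero[OF comm_ring_hom_const4])
  have "?subst ([:c:] * x) = const4 c * ?subst x" for c x
    by (simp only: comm_ring_hom.hom_mult[OF comm_ring_hom_subst4] subst_const)
  then have "intertwines ?subst X ?X4"
    unfolding X_def
    by (intro intertwines_opser_log intertwines_word_series
        comm_ring_hom.axioms(1)[OF comm_ring_hom_subst4])
      (simp_all add: diagonal_letter_op_subst4[OF v])
  then have "?X4 m (?subst [:0, 1:]) = ?subst (X m [:0, 1:])"
    unfolding intertwines_def by blast
  moreover have "?subst [:0, 1:] = v"
    by (simp add: map_poly_pCons comm_ring_hom.hom_zero[OF comm_ring_hom_const4]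
        comm_ring_hom.hom_one[OF comm_ring_hom_const4])
  ultimately show "?X4 m v = ?subst (X m [:0, 1:])"
    by simp
qed

lemma opser_log_word_series_in_d0rho:
  assumes T: "grouplike_on ({..<n} \<times> {..2}) T"
  shows "opser_log (\<lambda>c. [:c:]) (word_series (\<lambda>c. [:c:]) letter_op ({..<n} \<times> {..2}) T) \<in> d0rho n"
proof -
  let ?A = "{..<n} \<times> {..2::nat}"
  let ?G = "word_series (\<lambda>c. [:c:]) letter_op ?A T"
  have A: "finite ?A" "snd ` ?A \<subseteq> {..2}"
    by auto
  have G0: "?G {#} = id"
    by (rule word_series_empty[OF comm_ring_hom_const_poly T])
  have G_additive: "additive (?G m)" for m
    by (intro additive_word_series derivation.axioms(1)[OF derivation_letter_op])
  have "opser_log (\<lambda>c. [:c:]) ?G m \<in> d0" for m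
    using opser_log_word_series_letter_op_eq[OF A(1) T] degree_opser_log_word_series_letter_op[OF A T]
    unfolding d0_def by blast
  moreover have "opser_log (\<lambda>c. [:c:]) ?G {#} = (\<lambda>q. 0)"
    by (rule opser_log_empty[where G="?G", OF comm_ring_hom_const_poly G0])
  moreover have "opser_log (\<lambda>c. [:c:]) ?G m = (\<lambda>q. 0)" if "\<not> set_mset m \<subseteq> {..<n}" for m
    by (rule opser_log_eq_0_outside[where G="?G", OF G_additive _ that]) (simp add: word_series_outside)
  ultimately show ?thesis
    unfolding d0rho_def by blast
qed

lemma ps_exp_opser_log_word_series:
  assumes T: "grouplike_on A T"
  shows "ps_exp (opser_log (\<lambda>c. [:c:]) (word_series (\<lambda>c. [:c:]) letter_op A T))
    = word_series (\<lambda>c. [:c:]) letter_op A T"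
  unfolding ps_exp_eq_opser_exp
  by (rule opser_exp_log[where G="word_series (\<lambda>c. [:c:]) letter_op A T",
        OF comm_ring_hom_const_poly word_series_empty[OF comm_ring_hom_const_poly T]
        additive_word_series[OF derivation.axioms(1)[OF derivation_letter_op]]])

theorem lemma4p7:
  fixes wt :: "'b \<Rightarrow> nat" and B :: "'b set" and n :: nat and h :: "nat \<Rightarrow> 'b"
    and S :: "('b \<times> nat) list \<Rightarrow> complex"
  assumes "inj_on h {..<n}" and "h ` {..<n} \<subseteq> B" and "\<forall>i<n. wt (h i) = 4"
    and "in_series_algebra wt B S" and "grouplike S"
  shows "Dmap n h S \<in> D0 n"
proof -
  define T where "T w = S (map (\<lambda>(i, j). (h i, j)) w)" for w
  have "inj_on (\<lambda>(i, j). (h i, j)) ({..<n} \<times> {..2::nat})"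
    using assms(1) by (auto simp: inj_on_def)
  then have T: "grouplike_on ({..<n} \<times> {..2}) T"
    unfolding T_def by (rule grouplike_on_map[OF _ grouplike_imp_grouplike_on[OF assms(5)]])
  have "Dmap n h S = word_series (\<lambda>c. [:c:]) letter_op ({..<n} \<times> {..2}) T"
    unfolding Dmap_eq_word_series T_def[abs_def] ..
  also have "\<dots> = ps_exp (opser_log (\<lambda>c. [:c:]) (word_series (\<lambda>c. [:c:]) letter_op ({..<n} \<times> {..2}) T))"
    by (rule ps_exp_opser_log_word_series[OF T, symmetric])
  finally show ?thesis
    unfolding D0_def by (rule ssubst) (rule imageI[OF opser_log_word_series_in_d0rho[OF T]])
qed

end
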